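(* Let $n\ge 3$. Let $\pi$ be a permutation of $\{1,\dots,n\}$ containing the pattern $321$ exactly once, and let $c>b>a$ be the values of that unique occurrence, so that $\pi$ can be written as the concatenation $\pi=\pi_1\, c\, \pi_2\, b\, \pi_3\, a\, \pi_4$ of (possibly empty) words $\pi_1,\pi_2,\pi_3,\pi_4$ and the letters $c,b,a$. Then every entry of $\pi$ to the left of $b$ other than $c$ is smaller than $b$, and every entry to the right of $b$ other than $a$ is larger than $b$. Consequently $\sigma_1:=\pi_1\, b\, \pi_2\, a$ is a $321$-avoiding permutation of $\{1,\dots,b\}$ whose last letter is not $b$, and $\sigma_2:=c\,\pi_3\, b\,\pi_4$ is a $321$-avoiding permutation of $\{b,\dots,n\}$ whose first letter is not $b$. Moreover, the map $\pi\mapsto(b,\sigma_1,\sigma_2)$ is a bijection from the set of permutations of $\{1,\dots,n\}$ containing $321$ exactly once onto the set of triples $(b,\sigma_1,\sigma_2)$ with $2\le b\le n-1$, $\sigma_1$ a $321$-avoiding permutation of $\{1,\dots,b\}$ not ending with $b$, and $\sigma_2$ a $321$-avoiding permutation of $\{b,\dots,n\}$ not starting with $b$.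
   Context: Permutations are written in one-line notation as words; a permutation of a finite set of integers $S$ is a word using each element of $S$ exactly once. Such a word $w=w_1\cdots w_m$ contains an occurrence of the pattern $321$ if there are positions $i<j<k$ with $w_i>w_j>w_k$; it is $321$-avoiding if there is no such triple; it contains $321$ exactly once if there is exactly one such triple of positions. *)

theory Defs
  imports Main
begin

text \<open>Permutations are words (lists) of integers. Positions are 0-indexed.\<close>

definition is_perm_of :: "nat list \<Rightarrow> nat set \<Rightarrow> bool" where
  "is_perm_of w S \<longleftrightarrow> distinct w \<and> set w = S"

definition occ321 :: "nat list \<Rightarrow> (nat \<times> nat \<times> nat) set" where
  "occ321 w = {(i, j, k). i < j \<and> j < k \<and> k < length w \<and> w ! i > w ! j \<and> w ! j > w ! k}"

definition avoids321 :: "nat list \<Rightarrow> bool" where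
  "avoids321 w \<longleftrightarrow> occ321 w = {}"

definition contains321_once :: "nat list \<Rightarrow> bool" where
  "contains321_once w \<longleftrightarrow> card (occ321 w) = 1"

definition seg :: "nat list \<Rightarrow> nat \<Rightarrow> nat \<Rightarrow> nat list" where
  "seg w l r = take (r - l) (drop l w)"

text \<open>The map pi |-> (b, sigma1, sigma2), where pi = pi1 c pi2 b pi3 a pi4 with the unique
  occurrence at positions i < j < k; sigma1 = pi1 b pi2 a, sigma2 = c pi3 b pi4.\<close>
definition decomp321 :: "nat list \<Rightarrow> nat \<times> nat list \<times> nat list" where
  "decomp321 w = (let (i, j, k) = (THE t. t \<in> occ321 w) in
     (w ! j,
      seg w 0 i @ [w ! j] @ seg w (Suc i) j @ [w ! k],
      [w ! i] @ seg w (Suc j) k @ [w ! j] @ seg w (Suc k) (length w)))"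

definition perms321_once :: "nat \<Rightarrow> nat list set" where
  "perms321_once n = {w. is_perm_of w {1..n} \<and> contains321_once w}"

definition triples321 :: "nat \<Rightarrow> (nat \<times> nat list \<times> nat list) set" where
  "triples321 n = {(b, s1, s2). 2 \<le> b \<and> b \<le> n - 1
      \<and> is_perm_of s1 {1..b} \<and> avoids321 s1 \<and> last s1 \<noteq> b
      \<and> is_perm_of s2 {b..n} \<and> avoids321 s2 \<and> hd s2 \<noteq> b}"

end

theory Submission imports Defs begin

(* A permutation pi = pi1 c pi2 b pi3 a pi4 with a unique 321-occurrence (c,b,a) at positions
   i < j < k has every entry left of b (except c) below b and every entry right of b (except a)
   above b: otherwise that entry would form a second occurrence with (b,a) or with (c,b).
   Consequently the decomposition pi |-> (b, sigma1, sigma2) of Defs is obtained from pi by two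
   swaps of entries, and it is inverted by the gluing map glue321, which swaps them back. *)

lemma occ321_iff:
  "(p, q, r) \<in> occ321 w \<longleftrightarrow> p < q \<and> q < r \<and> r < length w \<and> w!p > w!q \<and> w!q > w!r"
  by (simp add: occ321_def)

lemma decomp321_as_swaps:
  assumes "occ321 w = {(i, j, k)}"
  shows "decomp321 w =
           (w!j, take (Suc j) (w[i := w!j, j := w!k]), drop j (w[j := w!i, k := w!j]))"
proof -
  have ijk: "i < j" "j < k" "k < length w" using assms occ321_iff by blast+
  have left: "seg w 0 i @ [w!j] @ seg w (Suc i) j @ [w!k] = take (Suc j) (w[i := w!j, j := w!k])"
    using ijk by (intro nth_equalityI) (auto simp: seg_def nth_append min_def nth_list_update nth_Cons')
  have right: "[w!i] @ seg w (Suc j) k @ [w!j] @ seg w (Suc k) (length w)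
      = drop j (w[j := w!i, k := w!j])"
    using ijk by (intro nth_equalityI)
      (auto simp: seg_def nth_append min_def nth_list_update nth_Cons' add.commute)
  show ?thesis unfolding decomp321_def assms using left right by simp
qed

text \<open>Position of a letter in a word (meaningful when the letter occurs).\<close>
definition pos_in :: "nat list \<Rightarrow> nat \<Rightarrow> nat" where
  "pos_in s v = (LEAST p. p < length s \<and> s!p = v)"

lemma pos_in_eq: "distinct s \<Longrightarrow> p < length s \<Longrightarrow> s!p = v \<Longrightarrow> pos_in s v = p"
  unfolding pos_in_def by (rule Least_equality) (auto simp: nth_eq_iff_index_eq)

text \<open>The inverse of the decomposition: for sigma1 = pi1 b pi2 a and sigma2 = c pi3 b pi4,
  put c in place of b in sigma1, drop a, and append sigma2 with b in place of c and a in place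
  of b.  This yields pi1 c pi2 b pi3 a pi4.\<close>
definition glue321 :: "nat \<times> nat list \<times> nat list \<Rightarrow> nat list" where
  "glue321 x = (case x of (b, s1, s2) \<Rightarrow>
     take (length s1 - 1) (s1[pos_in s1 b := hd s2]) @ s2[0 := b, pos_in s2 b := last s1])"

locale unique_321 =
  fixes w :: "nat list" and i j k :: nat
  assumes distinct_w: "distinct w" and occ_w: "occ321 w = {(i, j, k)}"
begin

lemma occ_positions: "i < j" "j < k" "k < length w" "w!j < w!i" "w!k < w!j"
  using occ_w occ321_iff by blast+

lemma nth_w_neq: "p < length w \<Longrightarrow> q < length w \<Longrightarrow> p \<noteq> q \<Longrightarrow> w!p \<noteq> w!q"
  using distinct_w by (simp add: nth_eq_iff_index_eq)

text \<open>An entry left of b other than c is smaller than b, else it would form the occurrence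
  (p, j, k).\<close>
lemma left_smaller: "p < j \<Longrightarrow> p \<noteq> i \<Longrightarrow> w!p < w!j"
proof (rule ccontr)
  assume p: "p < j" "p \<noteq> i" "\<not> w!p < w!j"
  have "w!p \<noteq> w!j" using nth_w_neq[of p j] p occ_positions by auto
  hence "(p, j, k) \<in> occ321 w" using p occ_positions by (auto simp: occ321_iff)
  thus False using occ_w p by auto
qed

text \<open>An entry right of b other than a is larger than b, else it would form the occurrence
  (i, j, p).\<close>
lemma right_larger: "j < p \<Longrightarrow> p < length w \<Longrightarrow> p \<noteq> k \<Longrightarrow> w!j < w!p"
proof (rule ccontr)
  assume p: "j < p" "p < length w" "p \<noteq> k" "\<not> w!j < w!p"
  have "w!p \<noteq> w!j" using nth_w_neq[of p j] p occ_positions by auto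
  hence "(i, j, p) \<in> occ321 w" using p occ_positions by (auto simp: occ321_iff)
  thus False using occ_w p by auto
qed

definition sigma1 :: "nat list" where "sigma1 = take (Suc j) (w[i := w!j, j := w!k])"
definition sigma2 :: "nat list" where "sigma2 = drop j (w[j := w!i, k := w!j])"

lemma decomp_w: "decomp321 w = (w!j, sigma1, sigma2)"
  using decomp321_as_swaps[OF occ_w] by (simp add: sigma1_def sigma2_def)

lemma length_sigma1: "length sigma1 = Suc j"
  using occ_positions by (simp add: sigma1_def)

lemma length_sigma2: "length sigma2 = length w - j"
  by (simp add: sigma2_def)

lemma nth_sigma1: "x \<le> j \<Longrightarrow> sigma1!x = (if x = i then w!j else if x = j then w!k else w!x)"
  using occ_positions by (auto simp: sigma1_def nth_list_update)

lemma nth_sigma2: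
  "x < length w - j \<Longrightarrow> sigma2!x = (if x = 0 then w!i else if x = k - j then w!j else w!(j + x))"
  using occ_positions by (auto simp: sigma2_def nth_list_update)

lemma last_sigma1: "last sigma1 = w!k"
proof -
  have "sigma1 \<noteq> []" using length_sigma1 by auto
  thus ?thesis using last_conv_nth[of sigma1] length_sigma1 nth_sigma1[of j] occ_positions by simp
qed

lemma hd_sigma2: "hd sigma2 = w!i"
proof -
  have "0 < length w - j" using occ_positions by simp
  hence "sigma2 \<noteq> []" using length_sigma2 by auto
  thus ?thesis using hd_conv_nth[of sigma2] nth_sigma2[of 0] \<open>0 < length w - j\<close> by simp
qed

lemma set_sigma1: "set sigma1 = {v \<in> set w. v \<le> w!j}"
proof
  show "set sigma1 \<subseteq> {v \<in> set w. v \<le> w!j}"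
  proof
    fix v assume "v \<in> set sigma1"
    then obtain x where "x < length sigma1" "sigma1!x = v" by (auto simp: in_set_conv_nth)
    hence x: "x \<le> j" "v = sigma1!x" using length_sigma1 by auto
    consider "x = i" | "x = j" | "x < j" "x \<noteq> i" using x occ_positions by linarith
    thus "v \<in> {v \<in> set w. v \<le> w!j}"
    proof cases
      case 1 thus ?thesis using x nth_sigma1[of i] occ_positions by simp
    next
      case 2 thus ?thesis using x nth_sigma1[of j] occ_positions by simp
    next
      case 3 thus ?thesis using x nth_sigma1[of x] left_smaller[of x] occ_positions by simp
    qed
  qed
  show "{v \<in> set w. v \<le> w!j} \<subseteq> set sigma1"
  proof
    fix v assume v: "v \<in> {v \<in> set w. v \<le> w!j}"
    then obtain p where p: "p < length w" "w!p = v" by (auto simp: in_set_conv_nth)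
    consider "p = j" | "p < j" | "p = k" | "j < p" "p \<noteq> k" by linarith
    thus "v \<in> set sigma1"
    proof cases
      case 1 thus ?thesis using p nth_sigma1[of i] occ_positions length_sigma1 nth_mem[of i sigma1] by auto
    next
      case 2
      hence "p \<noteq> i" using p v occ_positions by auto
      thus ?thesis using 2 p nth_sigma1[of p] length_sigma1 nth_mem[of p sigma1] by auto
    next
      case 3 thus ?thesis using p nth_sigma1[of j] occ_positions length_sigma1 nth_mem[of j sigma1] by auto
    next
      case 4 thus ?thesis using right_larger[of p] p v by auto
    qed
  qed
qed

lemma set_sigma2: "set sigma2 = {v \<in> set w. w!j \<le> v}"
proof
  show "set sigma2 \<subseteq> {v \<in> set w. w!j \<le> v}"
  proof
    fix v assume "v \<in> set sigma2"
    then obtain x where x: "x < length w - j" "v = sigma2!x" using length_sigma2 by (auto simp: in_set_conv_nth)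
    have jx: "j + x < length w" using x by simp
    consider "x = 0" | "x = k - j" | "x \<noteq> 0" "x \<noteq> k - j" by blast
    thus "v \<in> {v \<in> set w. w!j \<le> v}"
    proof cases
      case 1 thus ?thesis using x nth_sigma2[of 0] occ_positions by simp
    next
      case 2 thus ?thesis using x nth_sigma2[of "k - j"] occ_positions by simp
    next
      case 3
      hence "j + x \<noteq> k" using occ_positions by auto
      thus ?thesis using 3 x jx nth_sigma2[of x] right_larger[of "j + x"] by simp
    qed
  qed
  show "{v \<in> set w. w!j \<le> v} \<subseteq> set sigma2"
  proof
    fix v assume v: "v \<in> {v \<in> set w. w!j \<le> v}"
    then obtain p where p: "p < length w" "w!p = v" by (auto simp: in_set_conv_nth)
    consider "p = j" | "p = i" | "p < j" "p \<noteq> i" | "p = k" | "j < p" "p \<noteq> k" by linarith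
    thus "v \<in> set sigma2"
    proof cases
      case 1 thus ?thesis using nth_sigma2[of "k - j"] p occ_positions length_sigma2 nth_mem[of "k - j" sigma2] by auto
    next
      case 2 thus ?thesis using nth_sigma2[of 0] p occ_positions length_sigma2 nth_mem[of 0 sigma2] by auto
    next
      case 3 thus ?thesis using left_smaller[of p] p v by auto
    next
      case 4 thus ?thesis using p v occ_positions by auto
    next
      case 5
      hence "p - j < length w - j" "p - j \<noteq> 0" "p - j \<noteq> k - j" "j + (p - j) = p"
        using p occ_positions by auto
      thus ?thesis using p nth_sigma2[of "p - j"] length_sigma2 nth_mem[of "p - j" sigma2] by auto
    qed
  qed
qed

lemma distinct_sigma1: "distinct sigma1"
proof -
  have "sigma1!x \<noteq> sigma1!y" if "x \<le> j" "y \<le> j" "x \<noteq> y" for x y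
    using that nth_sigma1[of x] nth_sigma1[of y] nth_w_neq[of x y] nth_w_neq[of x k] nth_w_neq[of y k]
      left_smaller[of x] left_smaller[of y] occ_positions
    by (auto split: if_splits)
  thus ?thesis by (auto simp: distinct_conv_nth length_sigma1)
qed

lemma distinct_sigma2: "distinct sigma2"
proof -
  have "sigma2!x \<noteq> sigma2!y" if xy: "x < length w - j" "y < length w - j" "x \<noteq> y" for x y
  proof -
    have "x \<noteq> 0 \<Longrightarrow> x \<noteq> k - j \<Longrightarrow> w!j < w!(j + x)"
      and "y \<noteq> 0 \<Longrightarrow> y \<noteq> k - j \<Longrightarrow> w!j < w!(j + y)"
      using right_larger[of "j + x"] right_larger[of "j + y"] xy occ_positions by simp_all
    thus ?thesis
      using xy nth_sigma2[of x] nth_sigma2[of y] occ_positions nth_eq_iff_index_eq[OF distinct_w]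
      by (auto split: if_splits)
  qed
  thus ?thesis by (auto simp: distinct_conv_nth length_sigma2)
qed

text \<open>An occurrence in sigma1 cannot use the moved b (it is the maximum), so it lifts to an
  occurrence in w with its last position moved from j to k; it would differ from (i, j, k).\<close>
lemma avoids_sigma1: "avoids321 sigma1"
proof -
  have False if occ: "(p, q, r) \<in> occ321 sigma1" for p q r
  proof -
    have pqr: "p < q" "q < r" "r \<le> j" "sigma1!p > sigma1!q" "sigma1!q > sigma1!r"
      using occ length_sigma1 by (auto simp: occ321_iff)
    have "q \<noteq> i" using pqr nth_sigma1[of p] nth_sigma1[of q] left_smaller[of p] by (auto split: if_splits)
    moreover have "r \<noteq> i" using pqr nth_sigma1[of r] nth_sigma1[of q] left_smaller[of q] by (auto split: if_splits)
    ultimately have "(p, q, if r = j then k else r) \<in> occ321 w"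
      using pqr nth_sigma1[of p] nth_sigma1[of q] nth_sigma1[of r] occ_positions
      by (auto simp: occ321_iff split: if_splits)
    thus False using occ_w pqr by auto
  qed
  thus ?thesis unfolding avoids321_def by auto
qed

text \<open>Dually, an occurrence in sigma2 cannot use the moved b (it is the minimum), so it lifts
  to an occurrence in w with its first position moved from j to i.\<close>
lemma avoids_sigma2: "avoids321 sigma2"
proof -
  have False if occ: "(p, q, r) \<in> occ321 sigma2" for p q r
  proof -
    have pqr: "p < q" "q < r" "r < length w - j" "sigma2!p > sigma2!q" "sigma2!q > sigma2!r"
      using occ length_sigma2 by (auto simp: occ321_iff)
    have q: "q \<noteq> k - j"
    proof
      assume qk: "q = k - j"
      have "w!j < w!(j + r)" using right_larger[of "j + r"] pqr qk occ_positions by simp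
      thus False using pqr nth_sigma2[of r] nth_sigma2[of q] qk occ_positions by (auto split: if_splits)
    qed
    have p: "p \<noteq> k - j"
    proof
      assume pk: "p = k - j"
      have "w!j < w!(j + q)" using right_larger[of "j + q"] pqr pk occ_positions q by simp
      thus False using pqr nth_sigma2[of p] nth_sigma2[of q] pk occ_positions by (auto split: if_splits)
    qed
    have "(if p = 0 then i else j + p, j + q, j + r) \<in> occ321 w"
      using pqr p q nth_sigma2[of p] nth_sigma2[of q] nth_sigma2[of r] occ_positions
      by (auto simp: occ321_iff split: if_splits)
    thus False using occ_w pqr by auto
  qed
  thus ?thesis unfolding avoids321_def by auto
qed

lemma glue_decomp: "glue321 (decomp321 w) = w"
proof -
  have pos1: "pos_in sigma1 (w!j) = i"
    using pos_in_eq[OF distinct_sigma1, of i] nth_sigma1[of i] length_sigma1 occ_positions by auto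
  have pos2: "pos_in sigma2 (w!j) = k - j"
    using pos_in_eq[OF distinct_sigma2, of "k - j"] nth_sigma2[of "k - j"] length_sigma2 occ_positions by auto
  have "take j (sigma1[i := w!i]) @ sigma2[0 := w!j, k - j := w!k] = w"
  proof (rule nth_equalityI)
    show "length (take j (sigma1[i := w!i]) @ sigma2[0 := w!j, k - j := w!k]) = length w"
      using length_sigma1 length_sigma2 occ_positions by simp
    fix x assume "x < length (take j (sigma1[i := w!i]) @ sigma2[0 := w!j, k - j := w!k])"
    hence x: "x < length w" using length_sigma1 length_sigma2 occ_positions by simp
    consider "x < j" | "x = j" | "x = k" | "j < x" "x \<noteq> k" by linarith
    thus "(take j (sigma1[i := w!i]) @ sigma2[0 := w!j, k - j := w!k]) ! x = w!x"
    proof cases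
      case 1 thus ?thesis using nth_sigma1[of x] length_sigma1 occ_positions
          by (auto simp: nth_append nth_list_update)
    next
      case 2 thus ?thesis using length_sigma1 length_sigma2 occ_positions
          by (simp add: nth_append nth_list_update)
    next
      case 3 thus ?thesis using length_sigma1 length_sigma2 occ_positions
          by (simp add: nth_append nth_list_update)
    next
      case 4
      hence "x - j \<noteq> 0" "x - j \<noteq> k - j" "x - j < length w - j" "j + (x - j) = x"
        using x occ_positions by auto
      thus ?thesis using 4 nth_sigma2[of "x - j"] length_sigma1 length_sigma2 occ_positions
        by (simp add: nth_append nth_list_update)
    qed
  qed
  thus ?thesis unfolding glue321_def decomp_w using pos1 pos2 length_sigma1 last_sigma1 hd_sigma2 by simp
qed

end

text \<open>Gluing: u1 = pi1 b pi2 a is 321-avoiding with maximum b not in last position, and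
  u2 = c pi3 b pi4 is 321-avoiding with minimum b not in first position.  The glued word is
  pi1 c pi2 b pi3 a pi4, with c at position i, b at position m and a at position m + t.\<close>
locale glue_321 =
  fixes b :: nat and u1 u2 :: "nat list"
  assumes distinct_u1: "distinct u1" and distinct_u2: "distinct u2"
    and avoids_u1: "avoids321 u1" and avoids_u2: "avoids321 u2"
    and b_in_u1: "b \<in> set u1" and u1_le_b: "\<forall>v \<in> set u1. v \<le> b" and last_u1: "last u1 \<noteq> b"
    and b_in_u2: "b \<in> set u2" and u2_ge_b: "\<forall>v \<in> set u2. b \<le> v" and hd_u2: "hd u2 \<noteq> b"
begin

definition m :: nat where "m = length u1 - 1"
definition i :: nat where "i = pos_in u1 b"
definition t :: nat where "t = pos_in u2 b"

abbreviation glued :: "nat list" where "glued \<equiv> glue321 (b, u1, u2)"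

lemma nonempty: "u1 \<noteq> []" "u2 \<noteq> []"
  using b_in_u1 b_in_u2 by auto

lemma length_u1: "length u1 = Suc m"
  using nonempty by (simp add: m_def)

lemma hd_last_nth: "hd u2 = u2!0" "last u1 = u1!m"
  using nonempty hd_conv_nth[of u2] last_conv_nth[of u1] length_u1 by auto

lemma pos_b_u1: "i < m" "u1!i = b"
proof -
  obtain p where p: "p < length u1" "u1!p = b" using b_in_u1 by (auto simp: in_set_conv_nth)
  have "p \<noteq> m" using p last_u1 hd_last_nth by auto
  thus "i < m" "u1!i = b" using pos_in_eq[OF distinct_u1 p] p length_u1 by (auto simp: i_def)
qed

lemma pos_b_u2: "0 < t" "t < length u2" "u2!t = b"
proof -
  obtain p where p: "p < length u2" "u2!p = b" using b_in_u2 by (auto simp: in_set_conv_nth)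
  have "p \<noteq> 0" using p hd_u2 hd_last_nth by (cases p) auto
  thus "0 < t" "t < length u2" "u2!t = b" using pos_in_eq[OF distinct_u2 p] p by (auto simp: t_def)
qed

lemma u1_below_b: "x < length u1 \<Longrightarrow> x \<noteq> i \<Longrightarrow> u1!x < b"
  using u1_le_b nth_mem[of x u1] pos_b_u1 nth_eq_iff_index_eq[OF distinct_u1, of x i] length_u1
  by (fastforce simp: le_less)

lemma u2_above_b: "x < length u2 \<Longrightarrow> x \<noteq> t \<Longrightarrow> b < u2!x"
  using u2_ge_b nth_mem[of x u2] pos_b_u2 nth_eq_iff_index_eq[OF distinct_u2, of x t]
  by (fastforce simp: le_less)

lemma a_below_b: "u1!m < b"
  using u1_below_b[of m] pos_b_u1 length_u1 by simp

lemma c_above_b: "b < u2!0"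
  using u2_above_b[of 0] pos_b_u2 nonempty by simp

lemma glued_eq: "glued = take m (u1[i := u2!0]) @ u2[0 := b, t := u1!m]"
  using hd_last_nth length_u1 by (simp add: glue321_def i_def t_def)

lemma length_glued: "length glued = m + length u2"
  using length_u1 by (simp add: glued_eq)

lemma glued_left: "x < m \<Longrightarrow> x \<noteq> i \<Longrightarrow> glued!x = u1!x \<and> glued!x < b"
  using u1_below_b[of x] length_u1 pos_b_u1 by (simp add: glued_eq nth_append nth_list_update)

lemma glued_at_i: "glued!i = u2!0"
  using length_u1 pos_b_u1 by (simp add: glued_eq nth_append)

lemma glued_at_m: "glued!m = b"
  using length_u1 nonempty pos_b_u2 by (simp add: glued_eq nth_append nth_list_update)

lemma glued_at_mt: "glued!(m + t) = u1!m"
  using length_u1 pos_b_u2 by (simp add: glued_eq nth_append nth_list_update)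

lemma glued_right:
  "m < x \<Longrightarrow> x < length glued \<Longrightarrow> x \<noteq> m + t \<Longrightarrow> glued!x = u2!(x - m) \<and> b < glued!x"
  using u2_above_b[of "x - m"] length_u1 pos_b_u2 length_glued
  by (auto simp: glued_eq nth_append nth_list_update)

lemma set_glued: "set glued = set u1 \<union> set u2"
proof
  show "set glued \<subseteq> set u1 \<union> set u2"
  proof
    fix v assume "v \<in> set glued"
    then obtain x where x: "x < length glued" "v = glued!x" by (auto simp: in_set_conv_nth)
    consider "x = i" | "x < m" "x \<noteq> i" | "x = m" | "x = m + t" | "m < x" "x \<noteq> m + t"
      by linarith
    thus "v \<in> set u1 \<union> set u2"
    proof cases
      case 1 thus ?thesis using x glued_at_i nonempty by simp
    next
      case 2 thus ?thesis using x glued_left[of x] length_u1 by simp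
    next
      case 3 thus ?thesis using x glued_at_m b_in_u1 by simp
    next
      case 4 thus ?thesis using x glued_at_mt length_u1 by simp
    next
      case 5 thus ?thesis using x glued_right[of x] length_glued by simp
    qed
  qed
  show "set u1 \<union> set u2 \<subseteq> set glued"
  proof
    have m_in: "m < length glued" "m + t < length glued" using length_glued pos_b_u2 by auto
    fix v assume "v \<in> set u1 \<union> set u2"
    then consider p where "p < length u1" "v = u1!p" | p where "p < length u2" "v = u2!p"
      by (auto simp: in_set_conv_nth)
    thus "v \<in> set glued"
    proof cases
      case (1 p)
      consider "p = i" | "p = m" | "p < m" "p \<noteq> i" using 1 length_u1 by linarith
      thus ?thesis
      proof cases
        case 1 thus ?thesis using \<open>v = u1!p\<close> pos_b_u1 glued_at_m m_in nth_mem[of m glued] by simp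
      next
        case 2 thus ?thesis using \<open>v = u1!p\<close> glued_at_mt m_in nth_mem[of "m + t" glued] by simp
      next
        case 3 thus ?thesis using \<open>v = u1!p\<close> glued_left[of p] m_in nth_mem[of p glued] by simp
      qed
    next
      case (2 p)
      consider "p = t" | "p = 0" | "0 < p" "p \<noteq> t" by linarith
      thus ?thesis
      proof cases
        case 1 thus ?thesis using \<open>v = u2!p\<close> pos_b_u2 glued_at_m m_in nth_mem[of m glued] by simp
      next
        case 2 thus ?thesis using \<open>v = u2!p\<close> glued_at_i pos_b_u1 m_in nth_mem[of i glued] by simp
      next
        case 3
        hence "m + p < length glued" "m < m + p" "m + p \<noteq> m + t" using 2 length_glued by auto
        thus ?thesis using \<open>v = u2!p\<close> glued_right[of "m + p"] nth_mem[of "m + p" glued] by simp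
      qed
    qed
  qed
qed

text \<open>The two words share only the letter b, so the glued word, which has one letter less
  than u1 and u2 together, has no repeated letter.\<close>
lemma distinct_glued: "distinct glued"
proof (rule card_distinct)
  have "set u1 \<inter> set u2 = {b}" using u1_le_b u2_ge_b b_in_u1 b_in_u2 by fastforce
  hence "card (set u1 \<union> set u2) + 1 = length u1 + length u2"
    using card_Un_Int[of "set u1" "set u2"] distinct_card[OF distinct_u1] distinct_card[OF distinct_u2]
    by simp
  thus "card (set glued) = length glued" using set_glued length_glued length_u1 by simp
qed

text \<open>An occurrence in the glued word whose middle entry lies left of b consists of entries
  of u1 (with a in place of its last entry if needed), so it would be an occurrence in u1.\<close>
lemma no_occ_middle_left:
  assumes occ: "(p, q, r) \<in> occ321 glued" and q: "q < m"
  shows False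
proof -
  have pqr: "p < q" "q < r" "r < length glued" "glued!q < glued!p" "glued!r < glued!q"
    using occ by (auto simp: occ321_iff)
  have "q \<noteq> i"
  proof
    assume "q = i"
    thus False using pqr q glued_left[of p] glued_at_i c_above_b by auto
  qed
  hence q_u1: "glued!q = u1!q" "glued!q < b" using glued_left[of q] q by auto
  have r_cases: "r < m \<and> r \<noteq> i \<or> r = m + t"
  proof -
    have "r \<noteq> i" using pqr q_u1 glued_at_i c_above_b by auto
    moreover have "r \<noteq> m" using pqr q_u1 glued_at_m by auto
    moreover have "\<not> (m < r \<and> r \<noteq> m + t)" using pqr q_u1 glued_right[of r] by auto
    ultimately show ?thesis by auto
  qed
  define r' where "r' = (if r = m + t then m else r)"
  have "u1!q < u1!p" using pqr q_u1 glued_left[of p] pos_b_u1 q by (cases "p = i") auto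
  moreover have "u1!r' < u1!q" using pqr q_u1 glued_left[of r] glued_at_mt r_cases by (auto simp: r'_def)
  moreover have "p < q" "q < r'" "r' < length u1" using pqr r_cases q length_u1 by (auto simp: r'_def)
  ultimately have "(p, q, r') \<in> occ321 u1" by (simp add: occ321_iff)
  thus False using avoids_u1 by (auto simp: avoids321_def)
qed

text \<open>Dually, an occurrence whose middle entry lies right of b would be an occurrence in u2
  (with c in place of its first entry if needed).\<close>
lemma no_occ_middle_right:
  assumes occ: "(p, q, r) \<in> occ321 glued" and q: "m < q"
  shows False
proof -
  have pqr: "p < q" "q < r" "r < length glued" "glued!q < glued!p" "glued!r < glued!q"
    using occ by (auto simp: occ321_iff)
  have "q \<noteq> m + t"
  proof
    assume "q = m + t"
    thus False using pqr q glued_at_mt glued_right[of r] a_below_b by auto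
  qed
  hence q_u2: "glued!q = u2!(q - m)" "b < glued!q" using glued_right[of q] q pqr by auto
  have p_cases: "p = i \<or> m < p \<and> p \<noteq> m + t"
  proof -
    have "\<not> (p < m \<and> p \<noteq> i)" using pqr q_u2 glued_left[of p] by auto
    moreover have "p \<noteq> m" using pqr q_u2 glued_at_m by auto
    moreover have "p \<noteq> m + t" using pqr q_u2 glued_at_mt a_below_b by auto
    ultimately show ?thesis using pos_b_u1 by auto
  qed
  define p' where "p' = (if p = i then 0 else p - m)"
  have "u2!(q - m) < u2!p'" using pqr q_u2 glued_at_i glued_right[of p] p_cases by (auto simp: p'_def)
  moreover have "u2!(r - m) < u2!(q - m)"
    using pqr q_u2 glued_right[of r] q pos_b_u2 by (cases "r = m + t") auto
  moreover have "p' < q - m" "q - m < r - m" "r - m < length u2"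
    using pqr p_cases q length_glued pos_b_u1 by (auto simp: p'_def)
  ultimately have "(p', q - m, r - m) \<in> occ321 u2" by (simp add: occ321_iff)
  thus False using avoids_u2 by (auto simp: avoids321_def)
qed

text \<open>An occurrence with middle entry b must use c (the only larger entry to its left) and
  a (the only smaller entry to its right).\<close>
lemma occ_middle_at_m:
  assumes occ: "(p, m, r) \<in> occ321 glued"
  shows "p = i \<and> r = m + t"
proof -
  have pr: "p < m" "m < r" "r < length glued" "b < glued!p" "glued!r < b"
    using occ glued_at_m by (auto simp: occ321_iff)
  show ?thesis using pr glued_left[of p] glued_right[of r] by force
qed

lemma occ_glued: "occ321 glued = {(i, m, m + t)}"
proof -
  have "(i, m, m + t) \<in> occ321 glued"
    using pos_b_u1 pos_b_u2 length_glued glued_at_i glued_at_m glued_at_mt a_below_b c_above_b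
    by (auto simp: occ321_iff)
  moreover have "x = (i, m, m + t)" if "x \<in> occ321 glued" for x
  proof -
    obtain p q r where x: "x = (p, q, r)" by (cases x)
    consider "q < m" | "q = m" | "m < q" by linarith
    thus ?thesis
      using that x no_occ_middle_left[of p q r] no_occ_middle_right[of p q r] occ_middle_at_m[of p r]
      by cases auto
  qed
  ultimately show ?thesis by blast
qed

lemma decomp_glue: "decomp321 glued = (b, u1, u2)"
proof -
  have m_in: "m < length glued" "m + t < length glued" using length_glued pos_b_u2 by auto
  have left: "take (Suc m) (glued[i := glued!m, m := glued!(m + t)]) = u1"
  proof (rule nth_equalityI)
    show "length (take (Suc m) (glued[i := glued!m, m := glued!(m + t)])) = length u1"
      using m_in length_u1 by simp
    fix x assume "x < length (take (Suc m) (glued[i := glued!m, m := glued!(m + t)]))"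
    hence x: "x \<le> m" using m_in by simp
    consider "x = i" | "x = m" | "x < m" "x \<noteq> i" using x by linarith
    thus "take (Suc m) (glued[i := glued!m, m := glued!(m + t)]) ! x = u1!x"
    proof cases
      case 1 thus ?thesis using pos_b_u1 m_in glued_at_m by (simp add: nth_list_update)
    next
      case 2 thus ?thesis using pos_b_u1 m_in glued_at_mt by (simp add: nth_list_update)
    next
      case 3 thus ?thesis using pos_b_u1 m_in glued_left[of x] by (simp add: nth_list_update)
    qed
  qed
  have right: "drop m (glued[m := glued!i, m + t := glued!m]) = u2"
  proof (rule nth_equalityI)
    show "length (drop m (glued[m := glued!i, m + t := glued!m])) = length u2"
      using length_glued by simp
    fix x assume "x < length (drop m (glued[m := glued!i, m + t := glued!m]))"
    hence x: "m + x < length glued" using length_glued by simp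
    consider "x = 0" | "x = t" | "0 < x" "x \<noteq> t" by linarith
    thus "drop m (glued[m := glued!i, m + t := glued!m]) ! x = u2!x"
    proof cases
      case 1 thus ?thesis using pos_b_u2 m_in glued_at_i by (simp add: nth_list_update)
    next
      case 2 thus ?thesis using pos_b_u2 m_in glued_at_m by (simp add: nth_list_update)
    next
      case 3 thus ?thesis using x glued_right[of "m + x"] by (simp add: nth_list_update)
    qed
  qed
  show ?thesis using decomp321_as_swaps[OF occ_glued] left right glued_at_m by simp
qed

end

lemma perms321_once_unique:
  assumes "w \<in> perms321_once n"
  obtains i j k where "occ321 w = {(i, j, k)}" and "unique_321 w i j k"
proof -
  have "distinct w" "card (occ321 w) = 1"
    using assms by (auto simp: perms321_once_def is_perm_of_def contains321_once_def)
  moreover obtain i j k where "occ321 w = {(i, j, k)}"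
    using card_1_singletonE[OF \<open>card (occ321 w) = 1\<close>] by (metis prod_cases3)
  ultimately show thesis using that by (simp add: unique_321_def)
qed

lemma entries_around_b:
  assumes "w \<in> perms321_once n" and "occ321 w = {(i, j, k)}"
  shows "(\<forall>p < j. p \<noteq> i \<longrightarrow> w!p < w!j) \<and> (\<forall>p. j < p \<and> p < length w \<and> p \<noteq> k \<longrightarrow> w!j < w!p)"
proof -
  have "unique_321 w i j k" using assms by (simp add: unique_321_def perms321_once_def is_perm_of_def)
  thus ?thesis using unique_321.left_smaller unique_321.right_larger by blast
qed

lemma decomp_in_triples:
  assumes w: "w \<in> perms321_once n"
  shows "decomp321 w \<in> triples321 n"
proof -
  obtain i j k where "occ321 w = {(i, j, k)}" and "unique_321 w i j k"
    using perms321_once_unique[OF w] .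
  interpret unique_321 w i j k by fact
  have set_w: "set w = {1..n}" using w by (simp add: perms321_once_def is_perm_of_def)
  have range: "1 \<le> w!k" "w!i \<le> n" "w!j \<le> n"
    using nth_mem[of k w] nth_mem[of i w] nth_mem[of j w] occ_positions set_w by auto
  hence "set sigma1 = {1..w!j}" "set sigma2 = {w!j..n}"
    using set_sigma1 set_sigma2 set_w occ_positions by auto
  moreover have "2 \<le> w!j" "w!j \<le> n - 1" using range occ_positions by auto
  ultimately show ?thesis
    unfolding decomp_w triples321_def is_perm_of_def
    using distinct_sigma1 distinct_sigma2 avoids_sigma1 avoids_sigma2 last_sigma1 hd_sigma2 occ_positions
    by auto
qed

lemma glue_triple:
  assumes x: "x \<in> triples321 n"
  shows "glue321 x \<in> perms321_once n \<and> decomp321 (glue321 x) = x"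
proof -
  obtain b u1 u2 where x_eq: "x = (b, u1, u2)" by (cases x)
  have b: "2 \<le> b" "b \<le> n - 1" and set_u: "set u1 = {1..b}" "set u2 = {b..n}"
    using x by (auto simp: x_eq triples321_def is_perm_of_def)
  interpret glue_321 b u1 u2
    using x b set_u by unfold_locales (auto simp: x_eq triples321_def is_perm_of_def)
  have "set glued = {1..n}" using set_glued set_u b by auto
  thus ?thesis
    using distinct_glued occ_glued decomp_glue
    by (simp add: x_eq perms321_once_def is_perm_of_def contains321_once_def)
qed

theorem mainTheorem2:
  fixes n :: nat
  assumes "n \<ge> 3"
  shows "(\<forall>w i j k. w \<in> perms321_once n \<and> occ321 w = {(i, j, k)} \<longrightarrow>
            (\<forall>p < j. p \<noteq> i \<longrightarrow> w ! p < w ! j) \<and>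
            (\<forall>p. j < p \<and> p < length w \<and> p \<noteq> k \<longrightarrow> w ! p > w ! j))
       \<and> (\<forall>w \<in> perms321_once n. decomp321 w \<in> triples321 n)
       \<and> bij_betw decomp321 (perms321_once n) (triples321 n)"
proof (intro conjI)
  show "\<forall>w i j k. w \<in> perms321_once n \<and> occ321 w = {(i, j, k)} \<longrightarrow>
            (\<forall>p < j. p \<noteq> i \<longrightarrow> w ! p < w ! j) \<and>
            (\<forall>p. j < p \<and> p < length w \<and> p \<noteq> k \<longrightarrow> w ! p > w ! j)"
    by (metis entries_around_b)
  show "\<forall>w \<in> perms321_once n. decomp321 w \<in> triples321 n"
    using decomp_in_triples by blast
  show "bij_betw decomp321 (perms321_once n) (triples321 n)"
  proof (rule bij_betw_byWitness[where f' = glue321])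
    show "\<forall>w \<in> perms321_once n. glue321 (decomp321 w) = w"
      using perms321_once_unique unique_321.glue_decomp by metis
    show "\<forall>x \<in> triples321 n. decomp321 (glue321 x) = x"
      and "glue321 ` triples321 n \<subseteq> perms321_once n"
      using glue_triple by auto
    show "decomp321 ` perms321_once n \<subseteq> triples321 n"
      using decomp_in_triples by blast
  qed
qed

end
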